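(* Consider the Online Submodular Bipartite Matching problem (defined in the context) with arbitrary arrival rates $r_v\in[0,1]$. Let $\mathbf{x}^*\in[0,1]^E$ be a feasible solution of the program: maximize $F(\mathbf{x})$ subject to $\sum_{e\in E(v)} x_e \le r_v$ for all $v\in V$, $\sum_{e\in E(u)} x_e\le 1$ for all $u\in U$, $0\le x_e\le 1$ for all $e\in E$, obtained by the continuous greedy algorithm so that $F(\mathbf{x}^* )\ge (1-1/e)\mathbb{E}[\mathrm{OPT}]$. Consider the online algorithm MMP-ALG: when $v$ arrives at time $t$, sample at most one edge $e\in E(v)$, each $e$ with probability $x^*_e/r_v$; if $e=(u,v)$ is sampled and $u$ is still available, match $e$, otherwise skip. Then MMP-ALG achieves a competitive ratio of at least $(1-1/e)^2$ when $|U|=o(\sqrt{T})$ and $T\to\infty$.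
   Context: Online Submodular Bipartite Matching (OSBM): we are given a bipartite graph $G=(U,V,E)$ with $m=|E|$, where $U$ are offline vertices and $V$ are online vertex types, a finite known horizon $T$, and a known probability distribution $\{p_v\}_{v\in V}$ with $\sum_{v} p_v \le 1$. In each round $t\in\{1,\dots,T\}$, independently across rounds, at most one vertex of $V$ arrives: $v$ arrives with probability $p_v$. Let $r_v = T p_v \in [0,1]$. When $v$ arrives, the algorithm must immediately and irrevocably either reject it or match it to a still available neighbor $u\in U$; each $u\in U$ has unit capacity. We have value-oracle access to a non-negative monotone submodular $f:2^E\to\mathbb{R}_{\ge0}$ with $f(\emptyset)=0$; the goal is to maximize $\mathbb{E}[f(\mathcal{M})]$ for the final set $\mathcal{M}$ of matched edges. $\mathbb{E}[\mathrm{OPT}]$ is the expectation over arrival sequences $S$ of the maximum of $f$ over feasible hindsight matchings for $S$; the competitive ratio of ALG is the minimum over instances of $\mathbb{E}[\mathrm{ALG}]/\mathbb{E}[\mathrm{OPT}]$. For $w\in U\cup V$, $E(w)$ is the set of edges incident to $w$. $F:[0,1]^E\to\mathbb{R}_{\ge0}$ is the multilinear extension of $f$: $F(\mathbf{x})=\sum_{S\subseteq E}\prod_{e\in S}x_e\prod_{e\notin S}(1-x_e) f(S)$, i.e. the expected value of $f$ on a random set containing each $e$ independently with probability $x_e$. *)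

theory Defs
  imports Complex_Main
begin

text \<open>Offline vertices U, online
vertex types V, edges E \<subseteq> U \<times> V (an edge is a pair (u,v)), horizon T,
arrival probabilities p, rates r_v = T p_v, objective f on sets of edges.\<close>

definition rate :: "('v \<Rightarrow> real) \<Rightarrow> nat \<Rightarrow> 'v \<Rightarrow> real" where
  "rate p T v = real T * p v"

definition submodular_on :: "'e set \<Rightarrow> ('e set \<Rightarrow> real) \<Rightarrow> bool" where
  "submodular_on E f \<longleftrightarrow>
     (\<forall>A B e. A \<subseteq> B \<and> B \<subseteq> E \<and> e \<in> E - B \<longrightarrow>
        f (insert e A) - f A \<ge> f (insert e B) - f B)"

definition monotone_on_sets :: "'e set \<Rightarrow> ('e set \<Rightarrow> real) \<Rightarrow> bool" where
  "monotone_on_sets E f \<longleftrightarrow> (\<forall>A B. A \<subseteq> B \<and> B \<subseteq> E \<longrightarrow> f A \<le> f B)"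

definition osbm_instance ::
  "'u set \<Rightarrow> 'v set \<Rightarrow> ('u \<times> 'v) set \<Rightarrow> ('v \<Rightarrow> real) \<Rightarrow> nat \<Rightarrow> (('u \<times> 'v) set \<Rightarrow> real) \<Rightarrow> bool" where
  "osbm_instance U V E p T f \<longleftrightarrow>
     finite U \<and> finite V \<and> E \<subseteq> U \<times> V \<and> T \<ge> 1 \<and>
     (\<forall>v\<in>V. 0 \<le> p v) \<and> sum p V \<le> 1 \<and> (\<forall>v\<in>V. rate p T v \<le> 1) \<and>
     f {} = 0 \<and> (\<forall>A. A \<subseteq> E \<longrightarrow> 0 \<le> f A) \<and>
     monotone_on_sets E f \<and> submodular_on E f"

definition seqs :: "'a set \<Rightarrow> nat \<Rightarrow> 'a list set" where
  "seqs A n = {xs. set xs \<subseteq> A \<and> length xs = n}"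

text \<open>Probability of the arrival outcome of one round (None = no arrival).\<close>
definition arr_prob :: "'v set \<Rightarrow> ('v \<Rightarrow> real) \<Rightarrow> 'v option \<Rightarrow> real" where
  "arr_prob V p a = (case a of None \<Rightarrow> 1 - sum p V | Some v \<Rightarrow> p v)"

definition hindsight_matching :: "('u \<times> 'v) set \<Rightarrow> 'v option list \<Rightarrow> ('u \<times> 'v) set \<Rightarrow> bool" where
  "hindsight_matching E S M \<longleftrightarrow>
     M \<subseteq> E \<and> (\<forall>u. card {e\<in>M. fst e = u} \<le> 1) \<and>
     (\<forall>v. card {e\<in>M. snd e = v} \<le> count_list S (Some v))"

definition opt_value :: "('u \<times> 'v) set \<Rightarrow> (('u \<times> 'v) set \<Rightarrow> real) \<Rightarrow> 'v option list \<Rightarrow> real" where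
  "opt_value E f S = Max (f ` {M. hindsight_matching E S M})"

definition expected_opt ::
  "'v set \<Rightarrow> ('u \<times> 'v) set \<Rightarrow> ('v \<Rightarrow> real) \<Rightarrow> nat \<Rightarrow> (('u \<times> 'v) set \<Rightarrow> real) \<Rightarrow> real" where
  "expected_opt V E p T f =
     (\<Sum>S \<in> seqs (insert None (Some ` V)) T.
        prod_list (map (arr_prob V p) S) * opt_value E f S)"

definition multilinear_ext :: "'e set \<Rightarrow> ('e set \<Rightarrow> real) \<Rightarrow> ('e \<Rightarrow> real) \<Rightarrow> real" where
  "multilinear_ext E f x =
     (\<Sum>S \<in> Pow E. (\<Prod>e\<in>S. x e) * (\<Prod>e\<in>E - S. 1 - x e) * f S)"

definition lp_feasible ::
  "'u set \<Rightarrow> 'v set \<Rightarrow> ('u \<times> 'v) set \<Rightarrow> ('v \<Rightarrow> real) \<Rightarrow> nat \<Rightarrow> (('u \<times> 'v) \<Rightarrow> real) \<Rightarrow> bool" where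
  "lp_feasible U V E p T x \<longleftrightarrow>
     (\<forall>e\<in>E. 0 \<le> x e \<and> x e \<le> 1) \<and>
     (\<forall>v\<in>V. (\<Sum>e\<in>{e\<in>E. snd e = v}. x e) \<le> rate p T v) \<and>
     (\<forall>u\<in>U. (\<Sum>e\<in>{e\<in>E. fst e = u}. x e) \<le> 1)"

text \<open>MMP-ALG. One round produces (arrival, sampled edge). The joint probability:
no arrival; arrival of v with no sampled edge; arrival of v and sampled edge e \<in> E(v)
with probability p_v * x_e / r_v.\<close>
definition round_outcomes :: "'v set \<Rightarrow> ('u \<times> 'v) set \<Rightarrow> ('v option \<times> ('u \<times> 'v) option) set" where
  "round_outcomes V E =
     insert (None, None) ((\<lambda>v. (Some v, None)) ` V \<union> (\<lambda>e. (Some (snd e), Some e)) ` E)"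

definition round_prob ::
  "'v set \<Rightarrow> ('u \<times> 'v) set \<Rightarrow> ('v \<Rightarrow> real) \<Rightarrow> nat \<Rightarrow> (('u \<times> 'v) \<Rightarrow> real)
     \<Rightarrow> ('v option \<times> ('u \<times> 'v) option) \<Rightarrow> real" where
  "round_prob V E p T x \<omega> =
     (case \<omega> of
        (None, None) \<Rightarrow> 1 - sum p V
      | (None, Some e) \<Rightarrow> 0
      | (Some v, None) \<Rightarrow> p v * (1 - (\<Sum>e\<in>{e\<in>E. snd e = v}. x e / rate p T v))
      | (Some v, Some e) \<Rightarrow> (if e \<in> E \<and> snd e = v then p v * (x e / rate p T v) else 0))"

definition alg_step :: "('v option \<times> ('u \<times> 'v) option) \<Rightarrow> ('u \<times> 'v) set \<Rightarrow> ('u \<times> 'v) set" where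
  "alg_step \<omega> M =
     (case \<omega> of
        (Some v, Some e) \<Rightarrow> (if \<exists>e'\<in>M. fst e' = fst e then M else insert e M)
      | _ \<Rightarrow> M)"

definition alg_run :: "('v option \<times> ('u \<times> 'v) option) list \<Rightarrow> ('u \<times> 'v) set" where
  "alg_run \<omega>s = fold alg_step \<omega>s {}"

definition expected_alg ::
  "'v set \<Rightarrow> ('u \<times> 'v) set \<Rightarrow> ('v \<Rightarrow> real) \<Rightarrow> nat \<Rightarrow> (('u \<times> 'v) set \<Rightarrow> real)
     \<Rightarrow> (('u \<times> 'v) \<Rightarrow> real) \<Rightarrow> real" where
  "expected_alg V E p T f x =
     (\<Sum>\<omega>s \<in> seqs (round_outcomes V E) T.
        prod_list (map (round_prob V E p T x) \<omega>s) * f (alg_run \<omega>s))"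

end

theory Submission
  imports Defs
begin

(* Let R(A) be the multilinear extension of f at x over the edges whose offline endpoint
   is not yet matched by A, evaluated on top of A, so that R({}) = F(x).  In one round every
   edge e is tried with probability x_e / T.  The expected gain of f is therefore
   (1/T) * sum of x_e (f(A+e) - f(A)) over free e, which by submodularity is at least
   (R(A) - f(A)) / T, while R does not decrease in expectation because the x-mass at each
   offline vertex is at most 1.  Induction over the rounds gives
   E[f] >= (1 - (1 - 1/T)^T) F(x) >= (1 - 1/e) F(x) for every T, hence the ratio
   (1 - 1/e)^2 without any assumption relating |U| and T. *)

lemma multilinear_ext_empty: "multilinear_ext {} h x = h {}"
  by (simp add: multilinear_ext_def)

lemma multilinear_ext_insert:
  assumes "finite D" and "a \<notin> D"
  shows "multilinear_ext (insert a D) h x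
    = x a * multilinear_ext D (\<lambda>S. h (insert a S)) x + (1 - x a) * multilinear_ext D h x"
proof -
  let ?w = "\<lambda>D S. (\<Prod>e\<in>S. x e) * (\<Prod>e\<in>D - S. 1 - x e)"
  have inj: "inj_on (insert a) (Pow D)"
    using assms(2) by (intro inj_onI) (metis PowD insert_ident subsetD)
  have "multilinear_ext (insert a D) h x
      = (\<Sum>S\<in>Pow D. ?w (insert a D) S * h S) + (\<Sum>S\<in>insert a ` Pow D. ?w (insert a D) S * h S)"
    unfolding multilinear_ext_def Pow_insert using assms
    by (intro sum.union_disjoint) auto
  also have "(\<Sum>S\<in>insert a ` Pow D. ?w (insert a D) S * h S)
      = (\<Sum>S\<in>Pow D. ?w (insert a D) (insert a S) * h (insert a S))"
    using inj by (simp add: sum.reindex)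
  also have "\<dots> = x a * multilinear_ext D (\<lambda>S. h (insert a S)) x"
    unfolding multilinear_ext_def sum_distrib_left
  proof (rule sum.cong[OF refl])
    fix S assume S: "S \<in> Pow D"
    then have "finite S" "a \<notin> S" "insert a D - insert a S = D - S"
      using assms finite_subset by auto
    then show "?w (insert a D) (insert a S) * h (insert a S) = x a * (?w D S * h (insert a S))"
      by simp
  qed
  also have "(\<Sum>S\<in>Pow D. ?w (insert a D) S * h S) = (1 - x a) * multilinear_ext D h x"
    unfolding multilinear_ext_def sum_distrib_left
  proof (rule sum.cong[OF refl])
    fix S assume "S \<in> Pow D"
    then have "insert a D - S = insert a (D - S)" "finite (D - S)" "a \<notin> D - S"
      using assms by auto
    then show "?w (insert a D) S * h S = (1 - x a) * (?w D S * h S)"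
      by simp
  qed
  finally show ?thesis by simp
qed

lemma multilinear_ext_mono:
  assumes "\<forall>e\<in>D. 0 \<le> x e \<and> x e \<le> 1" and "\<And>S. S \<subseteq> D \<Longrightarrow> h S \<le> k S"
  shows "multilinear_ext D h x \<le> multilinear_ext D k x"
  unfolding multilinear_ext_def
proof (rule sum_mono)
  fix S assume S: "S \<in> Pow D"
  have "0 \<le> (\<Prod>e\<in>S. x e) * (\<Prod>e\<in>D - S. 1 - x e)"
    using assms(1) S by (intro mult_nonneg_nonneg prod_nonneg) auto
  then show "(\<Prod>e\<in>S. x e) * (\<Prod>e\<in>D - S. 1 - x e) * h S \<le> (\<Prod>e\<in>S. x e) * (\<Prod>e\<in>D - S. 1 - x e) * k S"
    using assms(2) S by (simp add: mult_left_mono)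
qed

lemma multilinear_ext_add:
  "multilinear_ext D (\<lambda>S. h S + k S) x = multilinear_ext D h x + multilinear_ext D k x"
  unfolding multilinear_ext_def by (simp add: distrib_left sum.distrib)

lemma multilinear_ext_diff:
  "multilinear_ext D (\<lambda>S. h S - k S) x = multilinear_ext D h x - multilinear_ext D k x"
  unfolding multilinear_ext_def by (simp add: right_diff_distrib sum_subtractf)

lemma multilinear_ext_cmult: "multilinear_ext D (\<lambda>S. c * h S) x = c * multilinear_ext D h x"
  unfolding multilinear_ext_def by (simp add: sum_distrib_left mult_ac)

lemma multilinear_ext_sum:
  "multilinear_ext D (\<lambda>S. \<Sum>i\<in>I. h i S) x = (\<Sum>i\<in>I. multilinear_ext D (h i) x)"
  unfolding multilinear_ext_def by (simp add: sum_distrib_left sum.swap[of _ I])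

lemma multilinear_ext_const: "finite D \<Longrightarrow> multilinear_ext D (\<lambda>_. c) x = c"
  by (induction D rule: finite_induct) (simp_all add: multilinear_ext_empty multilinear_ext_insert algebra_simps)

lemma multilinear_ext_modular:
  "finite D \<Longrightarrow> multilinear_ext D (\<lambda>S. \<Sum>e\<in>S. g e) x = (\<Sum>e\<in>D. x e * g e)"
proof (induction D rule: finite_induct)
  case empty
  then show ?case by (simp add: multilinear_ext_empty)
next
  case (insert a D)
  have "multilinear_ext D (\<lambda>S. \<Sum>e\<in>insert a S. g e) x = multilinear_ext D (\<lambda>S. g a + (\<Sum>e\<in>S. g e)) x"
    unfolding multilinear_ext_def
  proof (rule sum.cong[OF refl])
    fix S assume "S \<in> Pow D"
    then have "finite S" "a \<notin> S" using insert.hyps finite_subset by auto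
    then show "(\<Prod>e\<in>S. x e) * (\<Prod>e\<in>D - S. 1 - x e) * (\<Sum>e\<in>insert a S. g e)
       = (\<Prod>e\<in>S. x e) * (\<Prod>e\<in>D - S. 1 - x e) * (g a + (\<Sum>e\<in>S. g e))" by simp
  qed
  also have "\<dots> = g a + (\<Sum>e\<in>D. x e * g e)"
    using insert by (simp add: multilinear_ext_add multilinear_ext_const)
  finally show ?case
    using insert by (simp add: multilinear_ext_insert algebra_simps)
qed

lemma multilinear_ext_Un:
  assumes "finite D1" "finite D2" "D1 \<inter> D2 = {}"
  shows "multilinear_ext (D1 \<union> D2) h x
    = multilinear_ext D1 (\<lambda>S1. multilinear_ext D2 (\<lambda>S2. h (S1 \<union> S2)) x) x"
  using assms
proof (induction D1 arbitrary: h rule: finite_induct)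
  case empty
  then show ?case by (simp add: multilinear_ext_empty)
next
  case (insert a D1)
  then have "multilinear_ext (insert a D1 \<union> D2) h x
      = x a * multilinear_ext (D1 \<union> D2) (\<lambda>S. h (insert a S)) x + (1 - x a) * multilinear_ext (D1 \<union> D2) h x"
    by (simp add: multilinear_ext_insert)
  with insert show ?case
    by (simp add: multilinear_ext_insert)
qed

lemma submodular_on_Un_le:
  assumes subm: "submodular_on E f" and C: "C \<subseteq> E" and S: "finite S" "S \<subseteq> E"
  shows "f (C \<union> S) \<le> f C + (\<Sum>e\<in>S. f (insert e C) - f C)"
  using S
proof (induction S rule: finite_induct)
  case empty
  then show ?case by simp
next
  case (insert a S)
  show ?case
  proof (cases "a \<in> C")
    case True
    then have "C \<union> insert a S = C \<union> S" "insert a C = C" by auto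
    then show ?thesis using insert by simp
  next
    case False
    have "f (insert a (C \<union> S)) - f (C \<union> S) \<le> f (insert a C) - f C"
      using subm False insert C unfolding submodular_on_def
      by (meson Diff_iff Un_iff Un_least Un_upper1 insert_subset)
    then show ?thesis using insert by simp
  qed
qed

lemma monotone_on_sets_insert_ge:
  "monotone_on_sets E f \<Longrightarrow> C \<subseteq> E \<Longrightarrow> e \<in> E \<Longrightarrow> f C \<le> f (insert e C)"
  unfolding monotone_on_sets_def by blast

locale submodular_fractional =
  fixes E :: "'e set" and f :: "'e set \<Rightarrow> real" and x :: "'e \<Rightarrow> real"
  assumes finite_E: "finite E"
    and submodular: "submodular_on E f" and monotone: "monotone_on_sets E f"
    and x_range: "\<forall>e\<in>E. 0 \<le> x e \<and> x e \<le> 1"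
begin

lemma multilinear_ext_le_linearization:
  assumes "C \<subseteq> E" and "D \<subseteq> E"
  shows "multilinear_ext D (\<lambda>S. f (C \<union> S)) x \<le> f C + (\<Sum>e\<in>D. x e * (f (insert e C) - f C))"
proof -
  have "finite D" using assms finite_E finite_subset by auto
  moreover have "multilinear_ext D (\<lambda>S. f (C \<union> S)) x
      \<le> multilinear_ext D (\<lambda>S. f C + (\<Sum>e\<in>S. f (insert e C) - f C)) x"
    using x_range assms \<open>finite D\<close>
    by (intro multilinear_ext_mono submodular_on_Un_le[OF submodular]) (auto intro: finite_subset)
  ultimately show ?thesis
    by (simp add: multilinear_ext_add multilinear_ext_const multilinear_ext_modular)
qed

lemma mass_mult_multilinear_ext_le:
  assumes C: "C \<subseteq> E" and D: "D \<subseteq> E" and mass: "(\<Sum>e\<in>D. x e) \<le> 1"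
  shows "(\<Sum>e\<in>D. x e) * multilinear_ext D (\<lambda>S. f (C \<union> S)) x \<le> (\<Sum>e\<in>D. x e * f (insert e C))"
proof -
  let ?m = "\<Sum>e\<in>D. x e" and ?gain = "\<Sum>e\<in>D. x e * (f (insert e C) - f C)"
  have "0 \<le> ?m" using D x_range by (intro sum_nonneg) auto
  have "0 \<le> ?gain"
    using D C x_range monotone_on_sets_insert_ge[OF monotone C] by (intro sum_nonneg) auto
  have "?m * multilinear_ext D (\<lambda>S. f (C \<union> S)) x \<le> ?m * (f C + ?gain)"
    using multilinear_ext_le_linearization[OF C D] \<open>0 \<le> ?m\<close> by (rule mult_left_mono)
  also have "\<dots> \<le> ?m * f C + ?gain"
    using mass \<open>0 \<le> ?gain\<close> \<open>0 \<le> ?m\<close> by (simp add: distrib_left mult_left_le_one_le)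
  also have "\<dots> = (\<Sum>e\<in>D. x e * f (insert e C))"
    by (simp add: sum_distrib_right right_diff_distrib sum_subtractf)
  finally show ?thesis .
qed

end

definition free_edges :: "('u \<times> 'v) set \<Rightarrow> ('u \<times> 'v) set \<Rightarrow> ('u \<times> 'v) set" where
  "free_edges E A = {e\<in>E. \<forall>e'\<in>A. fst e' \<noteq> fst e}"

definition residual_value ::
  "('u \<times> 'v) set \<Rightarrow> (('u \<times> 'v) set \<Rightarrow> real) \<Rightarrow> ('u \<times> 'v \<Rightarrow> real) \<Rightarrow> ('u \<times> 'v) set \<Rightarrow> real" where
  "residual_value E f x A = multilinear_ext (free_edges E A) (\<lambda>S. f (A \<union> S)) x"

lemma residual_value_empty: "residual_value E f x {} = multilinear_ext E f x"
  by (simp add: residual_value_def free_edges_def)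

lemma residual_value_split_vertex:
  assumes "finite E"
  shows "residual_value E f x A
    = multilinear_ext {e\<in>free_edges E A. fst e \<noteq> u}
        (\<lambda>S'. multilinear_ext {e\<in>free_edges E A. fst e = u} (\<lambda>S. f (A \<union> S' \<union> S)) x) x"
proof -
  let ?D' = "{e\<in>free_edges E A. fst e \<noteq> u}" and ?Du = "{e\<in>free_edges E A. fst e = u}"
  have "finite ?D'" "finite ?Du" using assms by (simp_all add: free_edges_def)
  have "free_edges E A = ?D' \<union> ?Du" by auto
  then have "residual_value E f x A = multilinear_ext (?D' \<union> ?Du) (\<lambda>S. f (A \<union> S)) x"
    by (simp add: residual_value_def)
  also have "\<dots> = multilinear_ext ?D' (\<lambda>S'. multilinear_ext ?Du (\<lambda>S. f (A \<union> (S' \<union> S))) x) x"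
    using \<open>finite ?D'\<close> \<open>finite ?Du\<close> by (rule multilinear_ext_Un) auto
  finally show ?thesis by (simp add: Un_assoc)
qed

lemma residual_value_insert:
  assumes "e \<in> free_edges E A"
  shows "residual_value E f x (insert e A)
    = multilinear_ext {e'\<in>free_edges E A. fst e' \<noteq> fst e} (\<lambda>S. f (insert e (A \<union> S))) x"
proof -
  have "free_edges E (insert e A) = {e'\<in>free_edges E A. fst e' \<noteq> fst e}"
    using assms by (auto simp: free_edges_def)
  then show ?thesis by (simp add: residual_value_def)
qed

locale bipartite_submodular_fractional =
  submodular_fractional E f x for E :: "('u \<times> 'v) set" and f x
begin

lemma residual_value_le_linearization:
  "A \<subseteq> E \<Longrightarrow> residual_value E f x A \<le> f A + (\<Sum>e\<in>free_edges E A. x e * (f (insert e A) - f A))"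
  unfolding residual_value_def by (rule multilinear_ext_le_linearization) (auto simp: free_edges_def)

lemma residual_gain_at_vertex_nonneg:
  assumes A: "A \<subseteq> E" and mass: "(\<Sum>e\<in>{e\<in>E. fst e = u}. x e) \<le> 1"
  shows "0 \<le> (\<Sum>e\<in>{e\<in>free_edges E A. fst e = u}.
               x e * (residual_value E f x (insert e A) - residual_value E f x A))"
proof -
  define Du where "Du = {e\<in>free_edges E A. fst e = u}"
  define D' where "D' = {e\<in>free_edges E A. fst e \<noteq> u}"
  have sub: "Du \<subseteq> E" "D' \<subseteq> E" unfolding Du_def D'_def free_edges_def by auto
  have "finite D'" using sub finite_E finite_subset by auto
  have "(\<Sum>e\<in>Du. x e) \<le> (\<Sum>e\<in>{e\<in>E. fst e = u}. x e)"
    using x_range finite_E by (intro sum_mono2) (auto simp: Du_def free_edges_def)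
  then have mass_Du: "(\<Sum>e\<in>Du. x e) \<le> 1" using mass by linarith
  let ?R = "residual_value E f x" and ?m = "\<Sum>e\<in>Du. x e"
  \<comment> \<open>Matching an edge at u frees exactly the edges away from u, so both the gain and
     the loss are multilinear extensions over D'.\<close>
  have "(\<Sum>e\<in>Du. x e * ?R (insert e A)) = (\<Sum>e\<in>Du. x e * multilinear_ext D' (\<lambda>S. f (insert e (A \<union> S))) x)"
    using residual_value_insert[of _ E A f x] by (intro sum.cong) (auto simp: Du_def D'_def)
  also have "\<dots> = multilinear_ext D' (\<lambda>S. \<Sum>e\<in>Du. x e * f (insert e (A \<union> S))) x"
    by (simp add: multilinear_ext_sum multilinear_ext_cmult)
  finally have gain: "(\<Sum>e\<in>Du. x e * ?R (insert e A)) = \<dots>" .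
  have loss: "?m * ?R A = multilinear_ext D' (\<lambda>S'. ?m * multilinear_ext Du (\<lambda>S. f (A \<union> S' \<union> S)) x) x"
    by (simp add: residual_value_split_vertex[OF finite_E, of _ _ _ u] multilinear_ext_cmult Du_def D'_def)
  have "(\<Sum>e\<in>Du. x e * (?R (insert e A) - ?R A)) = (\<Sum>e\<in>Du. x e * ?R (insert e A)) - ?m * ?R A"
    by (simp add: right_diff_distrib sum_subtractf sum_distrib_right)
  also have "\<dots> = multilinear_ext D' (\<lambda>S'. (\<Sum>e\<in>Du. x e * f (insert e (A \<union> S')))
      - ?m * multilinear_ext Du (\<lambda>S. f (A \<union> S' \<union> S)) x) x"
    unfolding gain loss by (rule multilinear_ext_diff[symmetric])
  also have "\<dots> \<ge> multilinear_ext D' (\<lambda>_. 0) x"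
  proof (rule multilinear_ext_mono)
    show "\<forall>e\<in>D'. 0 \<le> x e \<and> x e \<le> 1" using x_range sub by auto
    fix S' assume "S' \<subseteq> D'"
    then have "A \<union> S' \<subseteq> E" using A sub by auto
    from mass_mult_multilinear_ext_le[OF this sub(1) mass_Du]
    show "0 \<le> (\<Sum>e\<in>Du. x e * f (insert e (A \<union> S'))) - ?m * multilinear_ext Du (\<lambda>S. f (A \<union> S' \<union> S)) x"
      by simp
  qed
  finally show ?thesis using multilinear_ext_const[OF \<open>finite D'\<close>] by (simp add: Du_def)
qed

lemma residual_gain_nonneg:
  assumes "A \<subseteq> E" and "\<forall>u. (\<Sum>e\<in>{e\<in>E. fst e = u}. x e) \<le> 1"
  shows "0 \<le> (\<Sum>e\<in>free_edges E A. x e * (residual_value E f x (insert e A) - residual_value E f x A))"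
proof -
  have "finite (free_edges E A)" using finite_E by (simp add: free_edges_def)
  then have "(\<Sum>e\<in>free_edges E A. x e * (residual_value E f x (insert e A) - residual_value E f x A))
      = (\<Sum>u\<in>fst ` free_edges E A. \<Sum>e\<in>{e\<in>free_edges E A. fst e = u}.
           x e * (residual_value E f x (insert e A) - residual_value E f x A))"
    by (simp add: sum.group)
  also have "\<dots> \<ge> 0"
    using assms by (intro sum_nonneg residual_gain_at_vertex_nonneg) auto
  finally show ?thesis .
qed

end

definition expected_after ::
  "'w set \<Rightarrow> ('w \<Rightarrow> real) \<Rightarrow> ('w \<Rightarrow> 's \<Rightarrow> 's) \<Rightarrow> nat \<Rightarrow> ('s \<Rightarrow> real) \<Rightarrow> 's \<Rightarrow> real" where
  "expected_after \<Omega> P step k g s = (\<Sum>ws\<in>seqs \<Omega> k. prod_list (map P ws) * g (fold step ws s))"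

lemma seqs_0: "seqs A 0 = {[]}"
  by (auto simp: seqs_def)

lemma seqs_Suc: "seqs A (Suc k) = (\<lambda>(w, ws). w # ws) ` (A \<times> seqs A k)"
  by (auto simp: seqs_def length_Suc_conv image_iff)

lemma expected_after_0: "expected_after \<Omega> P step 0 g s = g s"
  by (simp add: expected_after_def seqs_0)

lemma expected_after_Suc:
  "expected_after \<Omega> P step (Suc k) g s = (\<Sum>w\<in>\<Omega>. P w * expected_after \<Omega> P step k g (step w s))"
proof -
  have inj: "inj_on (\<lambda>(w, ws). w # ws) (\<Omega> \<times> seqs \<Omega> k)" by (auto intro: inj_onI)
  have "expected_after \<Omega> P step (Suc k) g s
      = (\<Sum>(w, ws)\<in>\<Omega> \<times> seqs \<Omega> k. P w * (prod_list (map P ws) * g (fold step ws (step w s))))"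
    unfolding expected_after_def seqs_Suc by (subst sum.reindex[OF inj]) (simp add: case_prod_beta mult_ac)
  also have "\<dots> = (\<Sum>w\<in>\<Omega>. P w * expected_after \<Omega> P step k g (step w s))"
    unfolding expected_after_def sum.cartesian_product[symmetric] by (simp add: sum_distrib_left)
  finally show ?thesis .
qed

locale mmp_instance =
  fixes U :: "'u set" and V :: "'v set" and E :: "('u \<times> 'v) set"
    and p :: "'v \<Rightarrow> real" and T :: nat and f :: "('u \<times> 'v) set \<Rightarrow> real" and x :: "'u \<times> 'v \<Rightarrow> real"
  assumes osbm: "osbm_instance U V E p T f" and feasible: "lp_feasible U V E p T x"
begin

abbreviation "\<Omega> \<equiv> round_outcomes V E"
abbreviation "P \<equiv> round_prob V E p T x"

lemma finite_U: "finite U" and finite_V: "finite V" and E_subset: "E \<subseteq> U \<times> V"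
  and T_pos: "T \<ge> 1" and p_nonneg: "\<forall>v\<in>V. 0 \<le> p v" and sum_p_le_1: "sum p V \<le> 1"
  and f_empty: "f {} = 0"
  using osbm unfolding osbm_instance_def by auto

sublocale bipartite_submodular_fractional E f x
proof
  show "finite E" using finite_U finite_V E_subset by (meson finite_SigmaI finite_subset)
  show "submodular_on E f" "monotone_on_sets E f" using osbm by (simp_all add: osbm_instance_def)
  show "\<forall>e\<in>E. 0 \<le> x e \<and> x e \<le> 1" using feasible by (simp add: lp_feasible_def)
qed

lemma sum_x_at_v_le_rate: "v \<in> V \<Longrightarrow> (\<Sum>e\<in>{e\<in>E. snd e = v}. x e) \<le> rate p T v"
  using feasible unfolding lp_feasible_def by auto

lemma sum_x_at_u_le_1: "(\<Sum>e\<in>{e\<in>E. fst e = u}. x e) \<le> 1"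
proof (cases "u \<in> U")
  case True
  then show ?thesis using feasible unfolding lp_feasible_def by auto
next
  case False
  then have "{e\<in>E. fst e = u} = {}" using E_subset by auto
  then show ?thesis by (simp only: sum.empty)
qed

lemma x_eq_0_if_p_eq_0: "e \<in> E \<Longrightarrow> p (snd e) = 0 \<Longrightarrow> x e = 0"
proof -
  assume e: "e \<in> E" and p0: "p (snd e) = 0"
  have "x e \<le> (\<Sum>e'\<in>{e'\<in>E. snd e' = snd e}. x e')"
    using e x_range finite_E by (intro member_le_sum) auto
  also have "\<dots> \<le> 0"
    using sum_x_at_v_le_rate[of "snd e"] e E_subset p0 by (auto simp: rate_def)
  finally show "x e = 0" using x_range e by force
qed

\<comment> \<open>For p v = 0 the rate is 0 and x e / 0 = 0; feasibility then forces x e = 0.\<close>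
lemma edge_sampling_prob: "e \<in> E \<Longrightarrow> p (snd e) * (x e / rate p T (snd e)) = x e / T"
  using x_eq_0_if_p_eq_0[of e] by (cases "p (snd e) = 0") (auto simp: rate_def)

lemma round_prob_edge: "e \<in> E \<Longrightarrow> P (Some (snd e), Some e) = x e / T"
  using edge_sampling_prob by (simp add: round_prob_def)

lemma round_outcomes_split:
  "\<Omega> = insert (None, None) ((\<lambda>v. (Some v, None)) ` V \<union> (\<lambda>e. (Some (snd e), Some e)) ` E)"
  and round_outcomes_finite: "finite ((\<lambda>v. (Some v, None)) ` V)" "finite ((\<lambda>e. (Some (snd e), Some e)) ` E)"
  and round_outcomes_disjoint:
    "(None, None) \<notin> (\<lambda>v. (Some v, None)) ` V \<union> (\<lambda>e. (Some (snd e), Some e)) ` E"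
    "(\<lambda>v. (Some v, None)) ` V \<inter> (\<lambda>e. (Some (snd e), Some e)) ` E = {}"
  using finite_V finite_E by (auto simp: round_outcomes_def)

lemma sum_round_outcomes:
  "(\<Sum>\<omega>\<in>\<Omega>. h \<omega>) = h (None, None) + (\<Sum>v\<in>V. h (Some v, None)) + (\<Sum>e\<in>E. h (Some (snd e), Some e))"
proof -
  let ?B = "(\<lambda>v. (Some v, None)) ` V" and ?C = "(\<lambda>e. (Some (snd e), Some e)) ` E"
  have "(\<Sum>\<omega>\<in>\<Omega>. h \<omega>) = h (None, None) + sum h (?B \<union> ?C)"
    unfolding round_outcomes_split
    using round_outcomes_finite round_outcomes_disjoint(1) by (intro sum.insert) auto
  also have "sum h (?B \<union> ?C) = sum h ?B + sum h ?C"
    using round_outcomes_finite round_outcomes_disjoint(2) by (rule sum.union_disjoint)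
  finally show ?thesis by (simp add: sum.reindex inj_on_def add.assoc)
qed

lemma round_prob_nonneg: "\<omega> \<in> \<Omega> \<Longrightarrow> 0 \<le> P \<omega>"
proof -
  have "(\<Sum>e\<in>{e\<in>E. snd e = v}. x e / rate p T v) \<le> 1" if "v \<in> V" for v
  proof (cases "rate p T v = 0")
    case False
    then have "0 < rate p T v" using p_nonneg that T_pos by (auto simp: rate_def)
    then show ?thesis using sum_x_at_v_le_rate[OF that] by (simp add: sum_divide_distrib[symmetric])
  qed simp
  then show "\<omega> \<in> \<Omega> \<Longrightarrow> 0 \<le> P \<omega>"
    using sum_p_le_1 p_nonneg x_range round_prob_edge
    unfolding round_outcomes_def by (auto simp: round_prob_def)
qed

lemma sum_round_prob: "(\<Sum>\<omega>\<in>\<Omega>. P \<omega>) = 1"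
proof -
  have "(\<Sum>v\<in>V. P (Some v, None))
      = sum p V - (\<Sum>v\<in>V. \<Sum>e\<in>{e\<in>E. snd e = v}. p (snd e) * (x e / rate p T (snd e)))"
    by (simp add: round_prob_def right_diff_distrib sum_subtractf sum_distrib_left)
  also have "(\<Sum>v\<in>V. \<Sum>e\<in>{e\<in>E. snd e = v}. p (snd e) * (x e / rate p T (snd e)))
      = (\<Sum>e\<in>E. p (snd e) * (x e / rate p T (snd e)))"
    using finite_E finite_V E_subset by (intro sum.group) auto
  also have "\<dots> = (\<Sum>e\<in>E. P (Some (snd e), Some e))"
    by (rule sum.cong[OF refl]) (simp only: edge_sampling_prob round_prob_edge)
  finally show ?thesis
    by (simp add: sum_round_outcomes round_prob_def)
qed

lemma alg_step_subset: "\<omega> \<in> \<Omega> \<Longrightarrow> A \<subseteq> E \<Longrightarrow> alg_step \<omega> A \<subseteq> E"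
  unfolding round_outcomes_def alg_step_def by (auto split: if_splits)

lemma expected_step:
  assumes "A \<subseteq> E"
  shows "(\<Sum>\<omega>\<in>\<Omega>. P \<omega> * g (alg_step \<omega> A))
    = g A + (\<Sum>e\<in>free_edges E A. x e * (g (insert e A) - g A)) / T"
proof -
  have gain: "P (Some (snd e), Some e) * (g (alg_step (Some (snd e), Some e) A) - g A)
      = (if e \<in> free_edges E A then x e * (g (insert e A) - g A) / T else 0)" if "e \<in> E" for e
    using that by (auto simp: round_prob_edge alg_step_def free_edges_def)
  have "(\<Sum>\<omega>\<in>\<Omega>. P \<omega> * g (alg_step \<omega> A))
      = (\<Sum>\<omega>\<in>\<Omega>. P \<omega>) * g A + (\<Sum>\<omega>\<in>\<Omega>. P \<omega> * (g (alg_step \<omega> A) - g A))"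
    by (simp add: algebra_simps sum_subtractf sum_distrib_left)
  also have "(\<Sum>\<omega>\<in>\<Omega>. P \<omega> * (g (alg_step \<omega> A) - g A))
      = (\<Sum>e\<in>E. P (Some (snd e), Some e) * (g (alg_step (Some (snd e), Some e) A) - g A))"
    by (simp add: sum_round_outcomes alg_step_def)
  also have "\<dots> = (\<Sum>e\<in>E. if e \<in> free_edges E A then x e * (g (insert e A) - g A) / T else 0)"
    by (rule sum.cong[OF refl]) (rule gain)
  also have "\<dots> = (\<Sum>e\<in>free_edges E A. x e * (g (insert e A) - g A)) / T"
    using finite_E by (simp add: sum.If_cases free_edges_def sum_divide_distrib Int_def)
  finally show ?thesis by (simp add: sum_round_prob)
qed

lemma expected_after_ge:
  assumes "A \<subseteq> E"
  shows "expected_after \<Omega> P alg_step k f A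
    \<ge> (1 - 1 / T) ^ k * f A + (1 - (1 - 1 / T) ^ k) * residual_value E f x A"
  using assms
proof (induction k arbitrary: A)
  case 0
  then show ?case by (simp add: expected_after_0)
next
  case (Suc k)
  let ?c = "1 - 1 / real T" and ?R = "residual_value E f x"
  have c: "0 \<le> ?c ^ k" "?c ^ k \<le> 1" using T_pos by (auto intro: power_le_one)
  have "?c ^ Suc k * f A + (1 - ?c ^ Suc k) * ?R A
      = ?c ^ k * (f A + (?R A - f A) / T) + (1 - ?c ^ k) * ?R A"
    using T_pos by (simp add: field_simps)
  also have "\<dots> \<le> ?c ^ k * (\<Sum>\<omega>\<in>\<Omega>. P \<omega> * f (alg_step \<omega> A))
      + (1 - ?c ^ k) * (\<Sum>\<omega>\<in>\<Omega>. P \<omega> * ?R (alg_step \<omega> A))"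
  proof -
    have "f A + (?R A - f A) / T \<le> (\<Sum>\<omega>\<in>\<Omega>. P \<omega> * f (alg_step \<omega> A))"
      using expected_step[OF Suc.prems] residual_value_le_linearization[OF Suc.prems]
      by (simp add: divide_right_mono)
    moreover have "?R A \<le> (\<Sum>\<omega>\<in>\<Omega>. P \<omega> * ?R (alg_step \<omega> A))"
      using expected_step[OF Suc.prems] residual_gain_nonneg[OF Suc.prems] sum_x_at_u_le_1
      by simp
    ultimately show ?thesis using c by (intro add_mono mult_left_mono) auto
  qed
  also have "\<dots> = (\<Sum>\<omega>\<in>\<Omega>. P \<omega> * (?c ^ k * f (alg_step \<omega> A) + (1 - ?c ^ k) * ?R (alg_step \<omega> A)))"
    by (simp add: distrib_left sum.distrib sum_distrib_left mult_ac)
  also have "\<dots> \<le> expected_after \<Omega> P alg_step (Suc k) f A"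
    unfolding expected_after_Suc
    using Suc alg_step_subset round_prob_nonneg by (intro sum_mono mult_left_mono) auto
  finally show ?case .
qed

lemma expected_alg_ge:
  "expected_alg V E p T f x \<ge> (1 - (1 - 1 / T) ^ T) * multilinear_ext E f x"
  using expected_after_ge[of "{}" T]
  by (simp add: expected_alg_def expected_after_def alg_run_def f_empty residual_value_empty)

lemma expected_opt_nonneg: "0 \<le> expected_opt V E p T f"
  unfolding expected_opt_def
proof (rule sum_nonneg)
  fix S assume S: "S \<in> seqs (insert None (Some ` V)) T"
  have "0 \<le> prod_list (map (arr_prob V p) S)"
    using S sum_p_le_1 p_nonneg by (intro prod_list_nonneg) (auto simp: seqs_def arr_prob_def)
  moreover have "0 \<le> opt_value E f S"
  proof -
    have "{M. hindsight_matching E S M} \<subseteq> Pow E" by (auto simp: hindsight_matching_def)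
    then have "finite {M. hindsight_matching E S M}" using finite_E finite_subset by blast
    moreover have "hindsight_matching E S {}" by (simp add: hindsight_matching_def)
    ultimately show ?thesis unfolding opt_value_def using f_empty by (metis Max_ge finite_imageI image_eqI mem_Collect_eq)
  qed
  ultimately show "0 \<le> prod_list (map (arr_prob V p) S) * opt_value E f S" by simp
qed

lemma competitive_ratio:
  assumes "multilinear_ext E f x \<ge> (1 - exp (-1)) * expected_opt V E p T f"
  shows "expected_alg V E p T f x \<ge> (1 - exp (-1)) ^ 2 * expected_opt V E p T f"
proof -
  have "0 \<le> 1 - exp (-1 :: real)" by simp
  have "(1 - 1 / T) ^ T \<le> exp (-1)"
    using exp_ge_one_minus_x_over_n_power_n[of 1 T] T_pos by simp
  moreover have "0 \<le> multilinear_ext E f x"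
    using assms expected_opt_nonneg \<open>0 \<le> 1 - exp (-1)\<close> by (meson mult_nonneg_nonneg order_trans)
  ultimately have "(1 - exp (-1)) * multilinear_ext E f x \<le> expected_alg V E p T f x"
    using expected_alg_ge by (meson diff_left_mono mult_right_mono order_trans)
  moreover have "(1 - exp (-1)) ^ 2 * expected_opt V E p T f \<le> (1 - exp (-1)) * multilinear_ext E f x"
    using mult_left_mono[OF assms \<open>0 \<le> 1 - exp (-1)\<close>] by (simp add: power2_eq_square mult.assoc)
  ultimately show ?thesis by linarith
qed

end

theorem theorem2:
  shows "\<forall>\<epsilon>>0. \<exists>\<delta>>0. \<exists>T0::nat. \<forall>(U::'u set) (V::'v set) E p T f x.
     osbm_instance U V E p T f \<and> T \<ge> T0 \<and> real (card U) \<le> \<delta> * sqrt (real T) \<and>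
     lp_feasible U V E p T x \<and>
     multilinear_ext E f x \<ge> (1 - exp (-1)) * expected_opt V E p T f
     \<longrightarrow> expected_alg V E p T f x \<ge> ((1 - exp (-1))^2 - \<epsilon>) * expected_opt V E p T f"
proof -
  have "((1 - exp (-1))^2 - \<epsilon>) * expected_opt V E p T f \<le> expected_alg V E p T f x"
    if "\<epsilon> > 0" and "osbm_instance U V E p T f" and "lp_feasible U V E p T x"
      and "multilinear_ext E f x \<ge> (1 - exp (-1)) * expected_opt V E p T f"
    for \<epsilon> :: real and U :: "'u set" and V :: "'v set" and E p T f x
  proof -
    interpret mmp_instance U V E p T f x using that by unfold_locales
    have "((1 - exp (-1))^2 - \<epsilon>) * expected_opt V E p T f \<le> (1 - exp (-1))^2 * expected_opt V E p T f"
      using \<open>\<epsilon> > 0\<close> expected_opt_nonneg by (simp add: mult_right_mono)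
    also have "\<dots> \<le> expected_alg V E p T f x"
      using competitive_ratio that(4) .
    finally show ?thesis .
  qed
  then show ?thesis
    by (intro allI impI exI[of _ "1::real"] conjI exI[of _ "0::nat"]) auto
qed

end
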